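(* Fix a monomial order on $S$. Let $J$ be a binomial ideal of $S$ (an ideal generated by binomials) and $E$ a monomial ideal of $S$. Then $J+E=J+\widehat E$.
   Context: $K$ is a field and $S=K[x_1,\ldots,x_n]$ with a fixed monomial order. For $0\neq f\in S$, $\mathrm{in}(f)$ denotes its leading monomial; for an ideal $I$, $\mathrm{in}(I)$ is the ideal generated by the leading monomials of the nonzero elements of $I$. A pair $(J,E)$ of ideals is G-nice if $\mathrm{in}(J+E)=\mathrm{in}(J)+\mathrm{in}(E)$. For an ideal $J$ and a monomial ideal $E$, $\widehat E$ (the G-nice monomial closure of $E$ with respect to $J$) is the intersection of all monomial ideals $F$ of $S$ with $E\subseteq F$ and $(J,F)$ G-nice. *)

theory Defs
  imports "HOL-Library.Poly_Mapping"
begin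

(* The polynomial ring S = K[x_v : v in 'v] (with 'v a finite type of variables)
 is modelled as the type (('v \<Rightarrow>\<^sub>0 nat) \<Rightarrow>\<^sub>0 'a): finitely supported maps from
 exponent vectors (monomials) to coefficients. *)

type_synonym ('v, 'a) mpoly = "('v \<Rightarrow>\<^sub>0 nat) \<Rightarrow>\<^sub>0 'a"

definition is_ideal :: "'r::comm_ring_1 set \<Rightarrow> bool" where
  "is_ideal I \<longleftrightarrow> 0 \<in> I \<and> (\<forall>a\<in>I. \<forall>b\<in>I. a + b \<in> I) \<and> (\<forall>r. \<forall>a\<in>I. r * a \<in> I)"

definition ideal_gen :: "'r::comm_ring_1 set \<Rightarrow> 'r set" where
  "ideal_gen A = \<Inter>{I. is_ideal I \<and> A \<subseteq> I}"

definition ideal_sum :: "'r::comm_ring_1 set \<Rightarrow> 'r set \<Rightarrow> 'r set" where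
  "ideal_sum I J = {a + b | a b. a \<in> I \<and> b \<in> J}"

definition monom :: "('v \<Rightarrow>\<^sub>0 nat) \<Rightarrow> ('v, 'a::comm_ring_1) mpoly" where
  "monom m = Poly_Mapping.single m 1"

definition is_monomial_ideal :: "('v, 'a::comm_ring_1) mpoly set \<Rightarrow> bool" where
  "is_monomial_ideal I \<longleftrightarrow> (\<exists>M. I = ideal_gen (monom ` M))"

definition is_binomial :: "('v, 'a::comm_ring_1) mpoly \<Rightarrow> bool" where
  "is_binomial f \<longleftrightarrow> card (Poly_Mapping.keys f) \<le> 2"

definition is_binomial_ideal :: "('v, 'a::comm_ring_1) mpoly set \<Rightarrow> bool" where
  "is_binomial_ideal I \<longleftrightarrow> (\<exists>B. (\<forall>f\<in>B. is_binomial f) \<and> I = ideal_gen B)"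

definition monomial_order :: "(('v \<Rightarrow>\<^sub>0 nat) \<Rightarrow> ('v \<Rightarrow>\<^sub>0 nat) \<Rightarrow> bool) \<Rightarrow> bool" where
  "monomial_order le \<longleftrightarrow>
     (\<forall>x. le x x) \<and> (\<forall>x y z. le x y \<longrightarrow> le y z \<longrightarrow> le x z) \<and>
     (\<forall>x y. le x y \<longrightarrow> le y x \<longrightarrow> x = y) \<and> (\<forall>x y. le x y \<or> le y x) \<and>
     (\<forall>x. le 0 x) \<and> (\<forall>x y z. le x y \<longrightarrow> le (x + z) (y + z))"

definition lead_mon :: "(('v \<Rightarrow>\<^sub>0 nat) \<Rightarrow> ('v \<Rightarrow>\<^sub>0 nat) \<Rightarrow> bool) \<Rightarrow> ('v, 'a::zero) mpoly \<Rightarrow> 'v \<Rightarrow>\<^sub>0 nat" where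
  "lead_mon le f = (THE m. m \<in> Poly_Mapping.keys f \<and> (\<forall>m'\<in>Poly_Mapping.keys f. le m' m))"

definition init_ideal :: "(('v \<Rightarrow>\<^sub>0 nat) \<Rightarrow> ('v \<Rightarrow>\<^sub>0 nat) \<Rightarrow> bool) \<Rightarrow> ('v, 'a::comm_ring_1) mpoly set \<Rightarrow> ('v, 'a) mpoly set" where
  "init_ideal le I = ideal_gen {monom (lead_mon le f) | f. f \<in> I \<and> f \<noteq> 0}"

definition G_nice :: "(('v \<Rightarrow>\<^sub>0 nat) \<Rightarrow> ('v \<Rightarrow>\<^sub>0 nat) \<Rightarrow> bool) \<Rightarrow> ('v, 'a::comm_ring_1) mpoly set \<Rightarrow> ('v, 'a) mpoly set \<Rightarrow> bool" where
  "G_nice le J E \<longleftrightarrow> init_ideal le (ideal_sum J E) = ideal_sum (init_ideal le J) (init_ideal le E)"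

definition G_nice_closure :: "(('v \<Rightarrow>\<^sub>0 nat) \<Rightarrow> ('v \<Rightarrow>\<^sub>0 nat) \<Rightarrow> bool) \<Rightarrow> ('v, 'a::comm_ring_1) mpoly set \<Rightarrow> ('v, 'a) mpoly set \<Rightarrow> ('v, 'a) mpoly set" where
  "G_nice_closure le J E = \<Inter>{F. is_monomial_ideal F \<and> E \<subseteq> F \<and> G_nice le J F}"

end

theory Submission
  imports Defs
begin

(* Let I = J + E and let F be the ideal generated by the monomials lying in I. The linear map
   deleting every term whose monomial lies in I sends E to 0 and J into J: it suffices to check
   the latter on the multiples of the binomial generators, which are binomials of J, and a binomial
   of J with exactly one term outside I would make that term an element of I. Hence the leading
   monomial of a nonzero f in I either lies in F or is the leading monomial of the image of f in J,
   so (J, F) is G-nice. As F is a monomial ideal containing E, the closure of E lies in F, and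
   J + E is squeezed between J + closure(E) and J + F = I. *)

lemma is_ideal_ideal_gen: "is_ideal (ideal_gen A)"
  unfolding is_ideal_def ideal_gen_def by auto

lemma ideal_gen_subset: "A \<subseteq> ideal_gen A"
  unfolding ideal_gen_def by auto

lemma ideal_gen_least: "is_ideal I \<Longrightarrow> A \<subseteq> I \<Longrightarrow> ideal_gen A \<subseteq> I"
  unfolding ideal_gen_def by auto

lemma ideal_gen_mono: "A \<subseteq> B \<Longrightarrow> ideal_gen A \<subseteq> ideal_gen B"
  by (meson is_ideal_ideal_gen ideal_gen_least ideal_gen_subset order_trans)

lemma ideal_zero: "is_ideal I \<Longrightarrow> 0 \<in> I"
  unfolding is_ideal_def by auto

lemma ideal_add: "is_ideal I \<Longrightarrow> a \<in> I \<Longrightarrow> b \<in> I \<Longrightarrow> a + b \<in> I"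
  unfolding is_ideal_def by auto

lemma ideal_mult: "is_ideal I \<Longrightarrow> a \<in> I \<Longrightarrow> r * a \<in> I"
  unfolding is_ideal_def by auto

lemma ideal_diff: "is_ideal I \<Longrightarrow> a \<in> I \<Longrightarrow> b \<in> I \<Longrightarrow> a - b \<in> I"
  using ideal_add[of I a "(-1) * b"] ideal_mult[of I b "-1"] by simp

lemma is_ideal_ideal_sum:
  assumes "is_ideal I" "is_ideal J"
  shows "is_ideal (ideal_sum I J)"
  unfolding is_ideal_def ideal_sum_def
proof (intro conjI ballI allI)
  show "0 \<in> {a + b |a b. a \<in> I \<and> b \<in> J}"
    using assms ideal_zero by force
next
  fix x y assume "x \<in> {a + b |a b. a \<in> I \<and> b \<in> J}" "y \<in> {a + b |a b. a \<in> I \<and> b \<in> J}"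
  then obtain a b c d where "x = a + b" "y = c + d" "a \<in> I" "b \<in> J" "c \<in> I" "d \<in> J"
    by auto
  then have "x + y = (a + c) + (b + d)" "a + c \<in> I" "b + d \<in> J"
    using assms ideal_add by (auto simp: algebra_simps)
  then show "x + y \<in> {a + b |a b. a \<in> I \<and> b \<in> J}" by blast
next
  fix r x assume "x \<in> {a + b |a b. a \<in> I \<and> b \<in> J}"
  then obtain a b where "x = a + b" "a \<in> I" "b \<in> J" by auto
  then have "r * x = r * a + r * b" "r * a \<in> I" "r * b \<in> J"
    using assms ideal_mult by (auto simp: algebra_simps)
  then show "r * x \<in> {a + b |a b. a \<in> I \<and> b \<in> J}" by blast
qed

lemma ideal_sum_upper1: "is_ideal J \<Longrightarrow> I \<subseteq> ideal_sum I J"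
  unfolding ideal_sum_def using ideal_zero by force

lemma ideal_sum_upper2: "is_ideal I \<Longrightarrow> J \<subseteq> ideal_sum I J"
  unfolding ideal_sum_def using ideal_zero by force

lemma ideal_sum_mono: "J \<subseteq> J' \<Longrightarrow> ideal_sum I J \<subseteq> ideal_sum I J'"
  unfolding ideal_sum_def by blast

lemma ideal_sum_least: "is_ideal K \<Longrightarrow> I \<subseteq> K \<Longrightarrow> J \<subseteq> K \<Longrightarrow> ideal_sum I J \<subseteq> K"
  unfolding ideal_sum_def using ideal_add by blast

lemma is_ideal_if_binomial_ideal: "is_binomial_ideal J \<Longrightarrow> is_ideal J"
  unfolding is_binomial_ideal_def using is_ideal_ideal_gen by auto

lemma is_ideal_if_monomial_ideal: "is_monomial_ideal E \<Longrightarrow> is_ideal E"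
  unfolding is_monomial_ideal_def using is_ideal_ideal_gen by auto

lemma single_mult_monom: "Poly_Mapping.single m c * monom m' = Poly_Mapping.single (m + m') c"
  by (simp add: monom_def mult_single)

lemma monom_mult_monom: "monom m * monom m' = monom (m + m')"
  by (simp add: monom_def mult_single)

lemma monom_nonzero: "(monom m :: ('v, 'a::comm_ring_1) mpoly) \<noteq> 0"
proof
  assume "(monom m :: ('v, 'a) mpoly) = 0"
  then have "Poly_Mapping.keys (monom m :: ('v, 'a) mpoly) = {}" by simp
  then show False by (simp add: monom_def)
qed

lemma single_in_ideal: "is_ideal I \<Longrightarrow> monom m \<in> I \<Longrightarrow> Poly_Mapping.single m c \<in> I"
  using ideal_mult[of I "monom m" "Poly_Mapping.single 0 c"] by (simp add: single_mult_monom)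

lemma monom_in_ideal_if_single:
  fixes c :: "'a::field"
  assumes "is_ideal I" "Poly_Mapping.single m c \<in> I" "c \<noteq> 0"
  shows "monom m \<in> I"
  using ideal_mult[OF assms(1,2), of "Poly_Mapping.single 0 (inverse c)"] assms(3)
  by (simp add: monom_def mult_single)

lemma update_eq_single_add:
  "a \<notin> Poly_Mapping.keys f \<Longrightarrow> Poly_Mapping.update a b f = Poly_Mapping.single a b + f"
  by (rule poly_mapping_eqI) (auto simp: lookup_update lookup_add lookup_single in_keys_iff when_def)

lemma in_ideal_if_terms_in_ideal:
  fixes h :: "('v, 'a::comm_ring_1) mpoly"
  assumes "is_ideal I" and "\<forall>k\<in>Poly_Mapping.keys h. monom k \<in> I"
  shows "h \<in> I"
  using assms(2)
proof (induction h rule: update_induct)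
  case const
  then show ?case using assms(1) ideal_zero by auto
next
  case (update f a b)
  have keys: "Poly_Mapping.keys (Poly_Mapping.update a b f) = insert a (Poly_Mapping.keys f)"
    using update.hyps by (simp add: keys_update)
  have "Poly_Mapping.single a b \<in> I"
    using update.prems keys single_in_ideal[OF assms(1)] by auto
  moreover have "f \<in> I"
    using update.IH update.prems keys by auto
  ultimately show ?case
    using update_eq_single_add[OF update.hyps(1)] ideal_add[OF assms(1)] by metis
qed

lemma monomial_ideal_terms:
  fixes E :: "('v, 'a::comm_ring_1) mpoly set"
  assumes "is_monomial_ideal E" "e \<in> E" "k \<in> Poly_Mapping.keys e"
  shows "monom k \<in> E"
proof -
  obtain M where M: "E = ideal_gen (monom ` M)"
    using assms(1) unfolding is_monomial_ideal_def by blast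
  have E: "is_ideal E" using is_ideal_if_monomial_ideal[OF assms(1)] .
  define Q where "Q = {f :: ('v, 'a) mpoly. \<forall>k\<in>Poly_Mapping.keys f. monom k \<in> E}"
  have "is_ideal Q"
    unfolding is_ideal_def
  proof (intro conjI ballI allI)
    show "0 \<in> Q" unfolding Q_def by simp
  next
    fix a b assume "a \<in> Q" "b \<in> Q"
    then show "a + b \<in> Q" unfolding Q_def using keys_add[of a b] by blast
  next
    fix r a assume a: "a \<in> Q"
    show "r * a \<in> Q" unfolding Q_def
    proof (intro CollectI ballI)
      fix k assume "k \<in> Poly_Mapping.keys (r * a)"
      then obtain x y where k: "k = x + y" and "y \<in> Poly_Mapping.keys a"
        using keys_mult[of r a] by blast
      then have "monom y \<in> E" using a unfolding Q_def by blast
      then have "monom x * monom y \<in> E" by (rule ideal_mult[OF E])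
      then show "monom k \<in> E" by (simp add: k monom_mult_monom)
    qed
  qed
  moreover have "monom ` M \<subseteq> Q"
  proof
    fix f :: "('v, 'a) mpoly" assume "f \<in> monom ` M"
    moreover have "monom ` M \<subseteq> E" using M ideal_gen_subset by blast
    ultimately show "f \<in> Q" unfolding Q_def by (auto simp: monom_def)
  qed
  ultimately have "E \<subseteq> Q"
    using M ideal_gen_least by blast
  then show ?thesis using assms(2,3) unfolding Q_def by blast
qed

lemma card_keys_single_mult_le:
  "card (Poly_Mapping.keys (Poly_Mapping.single a c * b)) \<le> card (Poly_Mapping.keys b)"
proof -
  have "Poly_Mapping.keys (Poly_Mapping.single a c * b) \<subseteq> (\<lambda>k. a + k) ` Poly_Mapping.keys b"
    using keys_mult[of "Poly_Mapping.single a c" b] by (auto split: if_splits)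
  then have "card (Poly_Mapping.keys (Poly_Mapping.single a c * b))
      \<le> card ((\<lambda>k. a + k) ` Poly_Mapping.keys b)"
    by (intro card_mono) auto
  also have "\<dots> \<le> card (Poly_Mapping.keys b)"
    by (rule card_image_le) simp
  finally show ?thesis .
qed

section \<open>Deleting the terms with monomials in a given set\<close>

lift_definition drop_terms :: "'k set \<Rightarrow> ('k \<Rightarrow>\<^sub>0 'b::zero) \<Rightarrow> 'k \<Rightarrow>\<^sub>0 'b"
  is "\<lambda>N f k. if k \<in> N then 0 else f k"
  by (erule finite_subset[rotated]) auto

lemma lookup_drop_terms:
  "Poly_Mapping.lookup (drop_terms N f) k = (if k \<in> N then 0 else Poly_Mapping.lookup f k)"
  by transfer simp

lemma keys_drop_terms: "Poly_Mapping.keys (drop_terms N f) = Poly_Mapping.keys f - N"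
  by (auto simp: in_keys_iff lookup_drop_terms split: if_splits)

lemma drop_terms_add:
  "drop_terms N (f + g) = drop_terms N f + (drop_terms N g :: 'k \<Rightarrow>\<^sub>0 'b::comm_monoid_add)"
  by (rule poly_mapping_eqI) (simp add: lookup_drop_terms lookup_add)

lemma drop_terms_zero: "drop_terms N 0 = 0"
  by (rule poly_mapping_eqI) (simp add: lookup_drop_terms)

lemma drop_terms_eq_zero_iff: "drop_terms N f = 0 \<longleftrightarrow> Poly_Mapping.keys f \<subseteq> N"
  unfolding keys_eq_empty[symmetric] keys_drop_terms by blast

lemma drop_terms_id: "Poly_Mapping.keys f \<inter> N = {} \<Longrightarrow> drop_terms N f = f"
  by (rule poly_mapping_eqI) (auto simp: lookup_drop_terms in_keys_iff)

lemma keys_diff_drop_terms: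
  "Poly_Mapping.keys (f - drop_terms N (f :: 'k \<Rightarrow>\<^sub>0 'b::ab_group_add)) \<subseteq> N"
  by (auto simp: in_keys_iff lookup_drop_terms lookup_minus split: if_splits)

text \<open>Multiples of a binomial are sums of the binomials \<open>single a c * b\<close>.\<close>

lemma drop_terms_mult_binomial:
  assumes "is_ideal J"
    and bin: "\<And>g. g \<in> J \<Longrightarrow> card (Poly_Mapping.keys g) \<le> 2 \<Longrightarrow> drop_terms N g \<in> J"
    and b: "b \<in> J" "card (Poly_Mapping.keys b) \<le> 2"
  shows "drop_terms N (r * b) \<in> J"
proof (induction r rule: update_induct)
  case const
  then show ?case using ideal_zero[OF \<open>is_ideal J\<close>] by (simp add: drop_terms_zero)
next
  case (update f a c)
  have "Poly_Mapping.update a c f * b = Poly_Mapping.single a c * b + f * b"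
    using update.hyps(1) by (simp add: update_eq_single_add distrib_right)
  moreover have "drop_terms N (Poly_Mapping.single a c * b) \<in> J"
    using card_keys_single_mult_le[of a c b] b(2)
    by (intro bin ideal_mult[OF \<open>is_ideal J\<close> b(1)]) simp
  ultimately show ?case
    using update.IH ideal_add[OF \<open>is_ideal J\<close>] by (simp add: drop_terms_add)
qed

lemma drop_terms_binomial_ideal:
  assumes J: "is_binomial_ideal J"
    and bin: "\<And>g. g \<in> J \<Longrightarrow> card (Poly_Mapping.keys g) \<le> 2 \<Longrightarrow> drop_terms N g \<in> J"
    and "j \<in> J"
  shows "drop_terms N j \<in> J"
proof -
  obtain B where B: "\<forall>f\<in>B. is_binomial f" "J = ideal_gen B"
    using J unfolding is_binomial_ideal_def by blast
  have idJ: "is_ideal J" using is_ideal_if_binomial_ideal[OF J] .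
  define P where "P = {f. \<forall>r. drop_terms N (r * f) \<in> J}"
  have "is_ideal P"
    unfolding is_ideal_def
  proof (intro conjI ballI allI)
    show "0 \<in> P" unfolding P_def using ideal_zero[OF idJ] by (simp add: drop_terms_zero)
  next
    fix a b assume "a \<in> P" "b \<in> P"
    then show "a + b \<in> P" unfolding P_def
      using ideal_add[OF idJ] by (simp add: distrib_left drop_terms_add)
  next
    fix s a assume "a \<in> P"
    then show "s * a \<in> P" unfolding P_def
      by (simp add: mult.assoc[symmetric])
  qed
  moreover have "B \<subseteq> P"
  proof
    fix b assume "b \<in> B"
    then have "b \<in> J" "card (Poly_Mapping.keys b) \<le> 2"
      using B ideal_gen_subset[of B] unfolding is_binomial_def by auto
    then show "b \<in> P"
      unfolding P_def using drop_terms_mult_binomial[OF idJ bin] by blast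
  qed
  ultimately have "J \<subseteq> P"
    unfolding B(2) by (rule ideal_gen_least)
  then have "drop_terms N (1 * j) \<in> J"
    using \<open>j \<in> J\<close> unfolding P_def by blast
  then show ?thesis by simp
qed

definition monomials_in :: "('v, 'a::comm_ring_1) mpoly set \<Rightarrow> ('v \<Rightarrow>\<^sub>0 nat) set" where
  "monomials_in I = {m. monom m \<in> I}"

lemma drop_monomials_in_ideal:
  assumes "is_ideal I" "g \<in> I"
  shows "drop_terms (monomials_in I) g \<in> I"
proof -
  have "\<forall>k\<in>Poly_Mapping.keys (g - drop_terms (monomials_in I) g). monom k \<in> I"
    using keys_diff_drop_terms[of g "monomials_in I"] unfolding monomials_in_def by blast
  then have "g - drop_terms (monomials_in I) g \<in> I"
    by (rule in_ideal_if_terms_in_ideal[OF assms(1)])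
  then have "g - (g - drop_terms (monomials_in I) g) \<in> I"
    by (rule ideal_diff[OF assms])
  then show ?thesis by simp
qed

text \<open>A binomial of \<open>J \<subseteq> I\<close> cannot have exactly one monomial outside \<open>monomials_in I\<close>:
  that term alone would be an element of \<open>I\<close>.\<close>

lemma drop_monomials_binomial:
  fixes g :: "('v, 'a::field) mpoly"
  assumes I: "is_ideal I" and "J \<subseteq> I" "is_ideal J"
    and g: "g \<in> J" "card (Poly_Mapping.keys g) \<le> 2"
  shows "drop_terms (monomials_in I) g \<in> J"
proof (rule ccontr)
  define N where "N = monomials_in I"
  assume not_in: "drop_terms (monomials_in I) g \<notin> J"
  then have "drop_terms N g \<noteq> g" "drop_terms N g \<noteq> 0"
    using g(1) ideal_zero[OF \<open>is_ideal J\<close>] unfolding N_def by auto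
  then have "\<not> Poly_Mapping.keys g \<inter> N = {}" "\<not> Poly_Mapping.keys g \<subseteq> N"
    using drop_terms_id[of g N] drop_terms_eq_zero_iff[of N g] by auto
  then obtain u v where u: "u \<in> Poly_Mapping.keys g" "u \<notin> N"
    and v: "v \<in> Poly_Mapping.keys g" "v \<in> N"
    by blast
  have "u \<noteq> v" using u v by blast
  then have sub: "{u, v} \<subseteq> Poly_Mapping.keys g" and card_uv: "card {u, v} = 2"
    using u v by auto
  have keys_g: "{u, v} = Poly_Mapping.keys g"
    by (rule card_seteq[OF finite_keys sub]) (use g(2) card_uv in simp)
  have "drop_terms N g = Poly_Mapping.single u (Poly_Mapping.lookup g u)"
  proof (rule poly_mapping_eqI)
    fix k
    have "k \<noteq> u \<Longrightarrow> k \<in> N \<or> Poly_Mapping.lookup g k = 0"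
      using keys_g v(2) by (metis in_keys_iff insertE singletonD)
    then show "Poly_Mapping.lookup (drop_terms N g) k
        = Poly_Mapping.lookup (Poly_Mapping.single u (Poly_Mapping.lookup g u)) k"
      using u(2) by (auto simp: lookup_drop_terms lookup_single when_def)
  qed
  moreover have "drop_terms N g \<in> I"
    using drop_monomials_in_ideal[OF I] g(1) \<open>J \<subseteq> I\<close> unfolding N_def by blast
  ultimately have "monom u \<in> I"
    using monom_in_ideal_if_single[OF I] u(1) by (simp add: in_keys_iff)
  then show False
    using u(2) unfolding N_def monomials_in_def by blast
qed

lemma drop_monomials_ideal_sum:
  fixes J E :: "('v, 'a::field) mpoly set"
  assumes J: "is_binomial_ideal J" and E: "is_monomial_ideal E" and "f \<in> ideal_sum J E"
  shows "drop_terms (monomials_in (ideal_sum J E)) f \<in> J"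
proof -
  define I where "I = ideal_sum J E"
  have "is_ideal J" "is_ideal E"
    using J E by (simp_all add: is_ideal_if_binomial_ideal is_ideal_if_monomial_ideal)
  then have I: "is_ideal I" and "J \<subseteq> I" "E \<subseteq> I"
    unfolding I_def by (simp_all add: is_ideal_ideal_sum ideal_sum_upper1 ideal_sum_upper2)
  obtain j e where f: "f = j + e" and "j \<in> J" "e \<in> E"
    using \<open>f \<in> ideal_sum J E\<close> unfolding ideal_sum_def by blast
  have "drop_terms (monomials_in I) j \<in> J"
    using drop_terms_binomial_ideal[OF J drop_monomials_binomial[OF I \<open>J \<subseteq> I\<close> \<open>is_ideal J\<close>]
        \<open>j \<in> J\<close>] .
  moreover have "drop_terms (monomials_in I) e = 0"
    using monomial_ideal_terms[OF E \<open>e \<in> E\<close>] \<open>E \<subseteq> I\<close>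
    unfolding drop_terms_eq_zero_iff monomials_in_def by blast
  ultimately show ?thesis
    unfolding f I_def[symmetric] by (simp add: drop_terms_add)
qed

lemma monomial_ideal_subset_monomials_in:
  assumes "is_monomial_ideal E" "E \<subseteq> I"
  shows "E \<subseteq> ideal_gen (monom ` monomials_in I)"
proof
  fix e assume "e \<in> E"
  have "monom k \<in> ideal_gen (monom ` monomials_in I)" if "k \<in> Poly_Mapping.keys e" for k
  proof -
    have "monom k \<in> I"
      using monomial_ideal_terms[OF assms(1) \<open>e \<in> E\<close> that] assms(2) by blast
    then have "monom k \<in> monom ` monomials_in I"
      unfolding monomials_in_def by (rule imageI[OF CollectI])
    then show ?thesis
      by (rule subsetD[OF ideal_gen_subset])
  qed
  then have "\<forall>k\<in>Poly_Mapping.keys e. monom k \<in> ideal_gen (monom ` monomials_in I)"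
    by blast
  then show "e \<in> ideal_gen (monom ` monomials_in I)"
    by (rule in_ideal_if_terms_in_ideal[OF is_ideal_ideal_gen])
qed

lemma ideal_gen_monomials_in_subset: "is_ideal I \<Longrightarrow> ideal_gen (monom ` monomials_in I) \<subseteq> I"
  by (erule ideal_gen_least) (unfold monomials_in_def, blast)

lemma finite_has_greatest_wrt:
  assumes total: "\<And>x y. le x y \<or> le y x" and trans: "\<And>x y z. le x y \<Longrightarrow> le y z \<Longrightarrow> le x z"
    and "finite A" "A \<noteq> {}"
  shows "\<exists>u\<in>A. \<forall>m\<in>A. le m u"
  using assms(3,4)
proof (induction A rule: finite_ne_induct)
  case (singleton x)
  then show ?case using total by blast
next
  case (insert x F)
  then obtain u where u: "u \<in> F" "\<forall>m\<in>F. le m u" by blast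
  show ?case
  proof (cases "le x u")
    case True
    then show ?thesis using u by auto
  next
    case False
    then have "le u x" using total by blast
    then have "le m x" if "m \<in> F" for m
      using u(2) that trans by blast
    moreover have "le x x" using total by blast
    ultimately show ?thesis by blast
  qed
qed

lemma monomial_orderD:
  assumes "monomial_order le"
  shows "le x x" "le x y \<or> le y x" "le x y \<Longrightarrow> le y z \<Longrightarrow> le x z"
    "le x y \<Longrightarrow> le y x \<Longrightarrow> x = y"
  using assms unfolding monomial_order_def by blast+

lemma lead_mon_eqI:
  assumes "monomial_order le"
    and "u \<in> Poly_Mapping.keys g" "\<forall>m\<in>Poly_Mapping.keys g. le m u"
  shows "lead_mon le g = u"
  unfolding lead_mon_def
proof (rule the_equality)
  fix m assume "m \<in> Poly_Mapping.keys g \<and> (\<forall>m'\<in>Poly_Mapping.keys g. le m' m)"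
  then have "le m u" "le u m" using assms(2,3) by blast+
  then show "m = u" by (rule monomial_orderD(4)[OF assms(1)])
qed (use assms(2,3) in blast)

lemma lead_mon_greatest:
  assumes "monomial_order le" "(f :: ('v, 'a::zero) mpoly) \<noteq> 0"
  shows "lead_mon le f \<in> Poly_Mapping.keys f \<and> (\<forall>m\<in>Poly_Mapping.keys f. le m (lead_mon le f))"
proof -
  have "\<exists>u\<in>Poly_Mapping.keys f. \<forall>m\<in>Poly_Mapping.keys f. le m u"
    by (rule finite_has_greatest_wrt[where le = le])
      (use assms monomial_orderD(2,3)[OF assms(1)] in auto)
  then obtain u where u: "u \<in> Poly_Mapping.keys f" "\<forall>m\<in>Poly_Mapping.keys f. le m u"
    by blast
  moreover have "lead_mon le f = u"
    by (rule lead_mon_eqI[OF assms(1) u])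
  ultimately show ?thesis by simp
qed

lemma lead_mon_monom: "monomial_order le \<Longrightarrow> lead_mon le (monom u) = u"
  by (rule lead_mon_eqI) (auto simp: monom_def monomial_orderD(1))

lemma monom_lead_mon_in_init_ideal:
  "f \<in> X \<Longrightarrow> f \<noteq> 0 \<Longrightarrow> monom (lead_mon le f) \<in> init_ideal le X"
  unfolding init_ideal_def by (rule subsetD[OF ideal_gen_subset]) blast

lemma is_ideal_init_ideal: "is_ideal (init_ideal le X)"
  unfolding init_ideal_def by (rule is_ideal_ideal_gen)

lemma init_ideal_mono: "X \<subseteq> Y \<Longrightarrow> init_ideal le X \<subseteq> init_ideal le Y"
  unfolding init_ideal_def by (rule ideal_gen_mono) blast

section \<open>The G-nice monomial ideal of an ideal\<close>

text \<open>If \<open>f \<in> I\<close> has its leading monomial outside \<open>monomials_in I\<close>, deleting the terms in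
  \<open>monomials_in I\<close> keeps that leading monomial, and the result lies in \<open>J\<close>.\<close>

lemma G_nice_monomials_in:
  fixes J I :: "('v, 'a::comm_ring_1) mpoly set"
  assumes le: "monomial_order le" and "is_ideal I"
    and JF: "ideal_sum J (ideal_gen (monom ` monomials_in I)) = I"
    and drop: "\<forall>f\<in>I. drop_terms (monomials_in I) f \<in> J"
  shows "G_nice le J (ideal_gen (monom ` monomials_in I))"
proof -
  define N where "N = monomials_in I"
  define F :: "('v, 'a) mpoly set" where "F = ideal_gen (monom ` N)"
  have JF': "ideal_sum J F = I"
    using JF unfolding F_def N_def .
  have "J \<subseteq> I"
    using ideal_sum_upper1[OF is_ideal_ideal_gen, of J "monom ` N"] JF' unfolding F_def by simp
  have "F \<subseteq> I"
    unfolding F_def N_def by (rule ideal_gen_monomials_in_subset[OF \<open>is_ideal I\<close>])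
  have "init_ideal le I \<subseteq> ideal_sum (init_ideal le J) (init_ideal le F)"
    unfolding init_ideal_def[of le I]
  proof (rule ideal_gen_least[OF is_ideal_ideal_sum[OF is_ideal_init_ideal is_ideal_init_ideal]],
      rule subsetI)
    fix x :: "('v, 'a) mpoly"
    assume "x \<in> {monom (lead_mon le f) |f. f \<in> I \<and> f \<noteq> 0}"
    then obtain f where x: "x = monom (lead_mon le f)" and "f \<in> I" "f \<noteq> 0"
      by blast
    define u where "u = lead_mon le f"
    have u: "u \<in> Poly_Mapping.keys f" "\<forall>m\<in>Poly_Mapping.keys f. le m u"
      using lead_mon_greatest[OF le \<open>f \<noteq> 0\<close>] unfolding u_def by blast+
    have "monom u \<in> ideal_sum (init_ideal le J) (init_ideal le F)"
    proof (cases "u \<in> N")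
      case True
      then have "monom u \<in> F"
        unfolding F_def by (intro subsetD[OF ideal_gen_subset] imageI)
      then have "monom (lead_mon le (monom u :: ('v, 'a) mpoly)) \<in> init_ideal le F"
        by (rule monom_lead_mon_in_init_ideal) (rule monom_nonzero)
      then have "monom u \<in> init_ideal le F"
        by (simp only: lead_mon_monom[OF le])
      then show ?thesis
        using ideal_sum_upper2[OF is_ideal_init_ideal] by blast
    next
      case False
      define g where "g = drop_terms N f"
      have ug: "u \<in> Poly_Mapping.keys g"
        using u(1) False unfolding g_def keys_drop_terms by blast
      then have "g \<noteq> 0" by auto
      have "lead_mon le g = u"
        by (rule lead_mon_eqI[OF le ug]) (use u(2) in \<open>simp add: g_def keys_drop_terms\<close>)
      moreover have "g \<in> J"
        using drop \<open>f \<in> I\<close> unfolding g_def N_def by blast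
      ultimately have "monom u \<in> init_ideal le J"
        using monom_lead_mon_in_init_ideal[OF _ \<open>g \<noteq> 0\<close>] by metis
      then show ?thesis
        using ideal_sum_upper1[OF is_ideal_init_ideal] by blast
    qed
    then show "x \<in> ideal_sum (init_ideal le J) (init_ideal le F)"
      unfolding x u_def .
  qed
  moreover have "ideal_sum (init_ideal le J) (init_ideal le F) \<subseteq> init_ideal le I"
    by (rule ideal_sum_least[OF is_ideal_init_ideal
          init_ideal_mono[OF \<open>J \<subseteq> I\<close>] init_ideal_mono[OF \<open>F \<subseteq> I\<close>]])
  ultimately show ?thesis
    unfolding G_nice_def N_def[symmetric] F_def[symmetric] JF' by (rule subset_antisym)
qed

theorem mainTheorem12:
  fixes le :: "('v::finite \<Rightarrow>\<^sub>0 nat) \<Rightarrow> ('v \<Rightarrow>\<^sub>0 nat) \<Rightarrow> bool"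
    and J E :: "('v, 'a::field) mpoly set"
  assumes "monomial_order le"
    and "is_binomial_ideal J"
    and "is_monomial_ideal E"
  shows "ideal_sum J E = ideal_sum J (G_nice_closure le J E)"
proof -
  define I where "I = ideal_sum J E"
  define F :: "('v, 'a) mpoly set" where "F = ideal_gen (monom ` monomials_in I)"
  have J: "is_ideal J" and E: "is_ideal E"
    using assms(2,3) by (simp_all add: is_ideal_if_binomial_ideal is_ideal_if_monomial_ideal)
  have I: "is_ideal I" and "J \<subseteq> I" "E \<subseteq> I"
    unfolding I_def by (simp_all add: is_ideal_ideal_sum ideal_sum_upper1 ideal_sum_upper2 J E)
  have "E \<subseteq> F" "F \<subseteq> I"
    unfolding F_def using monomial_ideal_subset_monomials_in[OF assms(3) \<open>E \<subseteq> I\<close>]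
      ideal_gen_monomials_in_subset[OF I] by auto
  then have JF: "ideal_sum J F = I"
    using ideal_sum_least[OF I \<open>J \<subseteq> I\<close>] ideal_sum_mono[of E F J] unfolding I_def by blast
  have "\<forall>f\<in>I. drop_terms (monomials_in I) f \<in> J"
    using drop_monomials_ideal_sum[OF assms(2,3)] unfolding I_def by blast
  then have "G_nice le J F"
    using G_nice_monomials_in[OF assms(1) I] JF unfolding F_def by blast
  then have "E \<subseteq> G_nice_closure le J E" "G_nice_closure le J E \<subseteq> F"
    using \<open>E \<subseteq> F\<close> unfolding G_nice_closure_def F_def is_monomial_ideal_def by auto
  then show ?thesis
    using ideal_sum_mono JF unfolding I_def by blast
qed

end
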